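(* Let $t,t'$ be graph monomials in $\mathcal{D}$ with vertex sets $V,V'$ and roots $\rho,\rho'$, and let $T=\tilde\Delta(tt')$, whose vertex set is $(V\sqcup V')/(\rho\sim\rho')$. Let $\pi$ be a partition of the vertex set of $T$ such that no block of $\pi$ contains two distinct vertices of $V$ and no block contains two distinct vertices of $V'$, and suppose that $T^\pi$ is an oriented cactus. Then every block of $\pi$ consists of exactly one vertex of $V$ and one vertex of $V'$ (the root block being $\{\rho=\rho'\}$), so $\pi$ induces a bijection $f_\pi:V\to V'$ with $v\overset{\pi}{\sim}f_\pi(v)$, and $f_\pi$ reverses adjacency: for $v,w\in V$, $t$ has an edge from $v$ to $w$ if and only if $t'$ has an edge from $f_\pi(w)$ to $f_\pi(v)$.
   Context: $(\mathcal{A},\varphi)$ is a tracial noncommutative probability space (unital complex algebra, unital tracial functional). A graph monomial in $\mathcal{A}$ is a finite connected directed multigraph with distinguished, not necessarily distinct, vertices $v_{\mathrm{in}},v_{\mathrm{out}}$ and edge labels in $\mathcal{A}$. The product $tt'$ identifies the input of $t$ with the output of $t'$; $\tilde\Delta(s)$ is the unrooted labelled graph obtained from $s$ by identifying its input and output. For a partition $\pi$ of the vertices, $T^\pi$ identifies the vertices in each block. A cactus is a connected multigraph with every edge in exactly one simple cycle (loops and pairs of parallel edges count as cycles); an oriented cactus is a directed multigraph whose underlying multigraph is a cactus and all of whose simple cycles are directed cycles. $\mathcal{D}$ is the set of graph monomials with $v_{\mathrm{in}}=v_{\mathrm{out}}$ (the root) such that: (A1) the underlying undirected graph is a tree; (A2)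 the root has degree $1$; (A3) no edge is labelled by a scalar multiple of $1_{\mathcal{A}}$; (A4) no vertex has both indegree and outdegree equal to one. *)

theory Defs
  imports Complex_Main "HOL-Library.Disjoint_Sets"
begin

text \<open>A unital complex algebra is modelled as a type of class ring_1 together with
a scalar multiplication by complex numbers satisfying the algebra axioms.\<close>

definition complex_algebra :: "(complex \<Rightarrow> 'a::ring_1 \<Rightarrow> 'a) \<Rightarrow> bool" where
  "complex_algebra sc \<longleftrightarrow>
     (\<forall>c x y. sc c (x + y) = sc c x + sc c y) \<and>
     (\<forall>c d x. sc (c + d) x = sc c x + sc d x) \<and>
     (\<forall>c d x. sc (c * d) x = sc c (sc d x)) \<and>
     (\<forall>x. sc 1 x = x) \<and>
     (\<forall>c x y. sc c (x * y) = sc c x * y \<and> sc c (x * y) = x * sc c y)"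

definition tracial_ncps :: "(complex \<Rightarrow> 'a::ring_1 \<Rightarrow> 'a) \<Rightarrow> ('a \<Rightarrow> complex) \<Rightarrow> bool" where
  "tracial_ncps sc phi \<longleftrightarrow> complex_algebra sc \<and>
     (\<forall>x y. phi (x + y) = phi x + phi y) \<and> (\<forall>c x. phi (sc c x) = c * phi x) \<and>
     phi 1 = 1 \<and> (\<forall>x y. phi (x * y) = phi (y * x))"

datatype ('v, 'e, 'a) gm =
  GM (verts: "'v set") (edges: "'e set") (src: "'e \<Rightarrow> 'v") (tgt: "'e \<Rightarrow> 'v")
     (lab: "'e \<Rightarrow> 'a") (vin: 'v) (vout: 'v)

definition uadj :: "('v, 'e, 'a) gm \<Rightarrow> ('v \<times> 'v) set" where
  "uadj G = {(src G e, tgt G e) | e. e \<in> edges G}"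

definition connected_gm :: "('v, 'e, 'a) gm \<Rightarrow> bool" where
  "connected_gm G \<longleftrightarrow> (\<forall>u\<in>verts G. \<forall>v\<in>verts G. (u, v) \<in> (uadj G \<union> (uadj G)\<inverse>)\<^sup>*)"

definition graph_monomial :: "('v, 'e, 'a) gm \<Rightarrow> bool" where
  "graph_monomial G \<longleftrightarrow> finite (verts G) \<and> finite (edges G) \<and>
     src G ` edges G \<subseteq> verts G \<and> tgt G ` edges G \<subseteq> verts G \<and>
     vin G \<in> verts G \<and> vout G \<in> verts G \<and> connected_gm G"

text \<open>Simple cycles of the underlying undirected multigraph: vertices v_0..v_(n-1) distinct,
edges e_0..e_(n-1) distinct, e_i joining v_i and v_(i+1 mod n); n = 1 gives loops, n = 2
pairs of parallel edges.\<close>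
definition ucycle :: "('v, 'e, 'a) gm \<Rightarrow> 'v list \<Rightarrow> 'e list \<Rightarrow> bool" where
  "ucycle G vs es \<longleftrightarrow> es \<noteq> [] \<and> length vs = length es \<and> distinct vs \<and> distinct es \<and>
     set es \<subseteq> edges G \<and>
     (\<forall>i < length es. {src G (es ! i), tgt G (es ! i)} = {vs ! i, vs ! ((i + 1) mod length es)})"

definition dcycle :: "('v, 'e, 'a) gm \<Rightarrow> 'v list \<Rightarrow> 'e list \<Rightarrow> bool" where
  "dcycle G vs es \<longleftrightarrow> es \<noteq> [] \<and> length vs = length es \<and> distinct vs \<and> distinct es \<and>
     set es \<subseteq> edges G \<and>
     (\<forall>i < length es. src G (es ! i) = vs ! i \<and> tgt G (es ! i) = vs ! ((i + 1) mod length es))"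

text \<open>A simple cycle (as a subgraph) is determined by its edge set.\<close>
definition simple_cycles :: "('v, 'e, 'a) gm \<Rightarrow> 'e set set" where
  "simple_cycles G = {set es | vs es. ucycle G vs es}"

definition is_tree :: "('v, 'e, 'a) gm \<Rightarrow> bool" where
  "is_tree G \<longleftrightarrow> connected_gm G \<and> simple_cycles G = {}"

definition is_cactus :: "('v, 'e, 'a) gm \<Rightarrow> bool" where
  "is_cactus G \<longleftrightarrow> connected_gm G \<and>
     (\<forall>e\<in>edges G. \<exists>!C. C \<in> simple_cycles G \<and> e \<in> C)"

definition oriented_cactus :: "('v, 'e, 'a) gm \<Rightarrow> bool" where
  "oriented_cactus G \<longleftrightarrow> is_cactus G \<and>
     (\<forall>C\<in>simple_cycles G. \<exists>vs es. dcycle G vs es \<and> set es = C)"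

definition indeg :: "('v, 'e, 'a) gm \<Rightarrow> 'v \<Rightarrow> nat" where
  "indeg G v = card {e \<in> edges G. tgt G e = v}"

definition outdeg :: "('v, 'e, 'a) gm \<Rightarrow> 'v \<Rightarrow> nat" where
  "outdeg G v = card {e \<in> edges G. src G e = v}"

definition degree :: "('v, 'e, 'a) gm \<Rightarrow> 'v \<Rightarrow> nat" where
  "degree G v = indeg G v + outdeg G v"

text \<open>The class D (depends on the scalar multiplication, for condition A3).\<close>
definition in_D :: "(complex \<Rightarrow> 'a::ring_1 \<Rightarrow> 'a) \<Rightarrow> ('v, 'e, 'a) gm \<Rightarrow> bool" where
  "in_D sc t \<longleftrightarrow> graph_monomial t \<and> vin t = vout t \<and>
     is_tree t \<and>
     degree t (vin t) = 1 \<and>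
     (\<forall>e\<in>edges t. lab t e \<notin> range (\<lambda>c. sc c 1)) \<and>
     (\<forall>v\<in>verts t. \<not> (indeg t v = 1 \<and> outdeg t v = 1))"

definition blk :: "'v set set \<Rightarrow> 'v \<Rightarrow> 'v set" where
  "blk P x = (THE B. B \<in> P \<and> x \<in> B)"

definition quot :: "('v, 'e, 'a) gm \<Rightarrow> 'v set set \<Rightarrow> ('v set, 'e, 'a) gm" where
  "quot G P = GM P (edges G) (blk P \<circ> src G) (blk P \<circ> tgt G) (lab G)
                 (blk P (vin G)) (blk P (vout G))"

definition glue_part :: "'v set \<Rightarrow> 'v \<Rightarrow> 'v \<Rightarrow> 'v set set" where
  "glue_part A a b = insert {a, b} ((\<lambda>x. {x}) ` (A - {a, b}))"

definition dunion :: "('v, 'e, 'a) gm \<Rightarrow> ('w, 'f, 'a) gm \<Rightarrow> ('v + 'w, 'e + 'f, 'a) gm" where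
  "dunion t t' = GM (Inl ` verts t \<union> Inr ` verts t') (Inl ` edges t \<union> Inr ` edges t')
     (case_sum (Inl \<circ> src t) (Inr \<circ> src t')) (case_sum (Inl \<circ> tgt t) (Inr \<circ> tgt t'))
     (case_sum (lab t) (lab t')) (Inr (vin t')) (Inl (vout t))"

definition prod_part :: "('v, 'e, 'a) gm \<Rightarrow> ('w, 'f, 'a) gm \<Rightarrow> ('v + 'w) set set" where
  "prod_part t t' = glue_part (verts (dunion t t')) (Inl (vin t)) (Inr (vout t'))"

definition gprod :: "('v, 'e, 'a) gm \<Rightarrow> ('w, 'f, 'a) gm \<Rightarrow> (('v + 'w) set, 'e + 'f, 'a) gm" where
  "gprod t t' = quot (dunion t t') (prod_part t t')"

definition delta_part :: "('v, 'e, 'a) gm \<Rightarrow> 'v set set" where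
  "delta_part s = glue_part (verts s) (vin s) (vout s)"

text \<open>Delta-tilde(s): identify input and output (the distinguished vertices of the result
are irrelevant; both are the merged vertex).\<close>
definition delta :: "('v, 'e, 'a) gm \<Rightarrow> ('v set, 'e, 'a) gm" where
  "delta s = quot s (delta_part s)"

text \<open>Images of vertices of t (resp. t') as vertices of Delta-tilde(t t').\<close>
definition vl :: "('v, 'e, 'a) gm \<Rightarrow> ('w, 'f, 'a) gm \<Rightarrow> 'v \<Rightarrow> ('v + 'w) set set" where
  "vl t t' v = blk (delta_part (gprod t t')) (blk (prod_part t t') (Inl v))"

definition vr :: "('v, 'e, 'a) gm \<Rightarrow> ('w, 'f, 'a) gm \<Rightarrow> 'w \<Rightarrow> ('v + 'w) set set" where
  "vr t t' w = blk (delta_part (gprod t t')) (blk (prod_part t t') (Inr w))"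

end

theory Submission
  imports Defs
begin

text \<open>
  The quotient \<open>T\<^sup>\<pi>\<close> is the edge-disjoint union of injective images of the trees \<open>t\<close>
  and \<open>t'\<close>, so each of its cycles uses edges of both. Suppose a block is the image of a
  vertex \<open>w\<close> of \<open>t\<close> but of no vertex of \<open>t'\<close>. All its edges then come from \<open>t\<close>, and their
  other ends are joined to each other, avoiding the block, through the connected image of \<open>t'\<close>;
  hence all edges at the block lie on one cycle of the cactus. That cycle is directed, so \<open>w\<close>
  has in- and outdegree one, which (A4) excludes (the roots are matched by the gluing). So every
  block matches a vertex of \<open>t\<close> with one of \<open>t'\<close>. Now an edge \<open>e\<close> of \<open>t\<close> and the path
  in \<open>t'\<close> between the matched endpoints form the cycle through \<open>e\<close>; reading this from both
  sides shows that the cycle consists of \<open>e\<close> and a single edge \<open>e'\<close> of \<open>t'\<close>, and as it is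
  directed, \<open>e'\<close> runs against \<open>e\<close>.
\<close>

section \<open>Undirected paths\<close>

definition adj_via :: "('v, 'e, 'a) gm \<Rightarrow> 'e set \<Rightarrow> ('v \<times> 'v) set" where
  "adj_via G S = {(x, y). \<exists>e\<in>S. {src G e, tgt G e} = {x, y}}"

definition edges_avoiding :: "('v, 'e, 'a) gm \<Rightarrow> 'v \<Rightarrow> 'e set" where
  "edges_avoiding G B = {e \<in> edges G. src G e \<noteq> B \<and> tgt G e \<noteq> B}"

definition upath :: "('v, 'e, 'a) gm \<Rightarrow> 'e set \<Rightarrow> 'v list \<Rightarrow> 'e list \<Rightarrow> bool" where
  "upath G S xs fs \<longleftrightarrow> length xs = Suc (length fs) \<and> distinct xs \<and> distinct fs \<and> set fs \<subseteq> S \<and>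
     (\<forall>j<length fs. {src G (fs ! j), tgt G (fs ! j)} = {xs ! j, xs ! Suc j})"

lemma sym_adj_via: "sym (adj_via G S)"
  unfolding adj_via_def sym_def by (auto simp: insert_commute)

lemma rtrancl_adj_via_sym: "(x, y) \<in> (adj_via G S)\<^sup>* \<Longrightarrow> (y, x) \<in> (adj_via G S)\<^sup>*"
  by (meson sym_adj_via sym_rtrancl symD)

lemma rtrancl_adj_via_mono: "S \<subseteq> S' \<Longrightarrow> (adj_via G S)\<^sup>* \<subseteq> (adj_via G S')\<^sup>*"
  by (rule rtrancl_mono) (auto simp: adj_via_def)

lemma uadj_symcl_eq_adj_via: "uadj G \<union> (uadj G)\<inverse> = adj_via G (edges G)"
  by (auto simp: uadj_def adj_via_def doubleton_eq_iff)

lemma rtrancl_adj_via_map: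
  assumes "(x, y) \<in> (adj_via H S)\<^sup>*" and "i ` S \<subseteq> S'"
    and "\<And>e. e \<in> S \<Longrightarrow> src G (i e) = a (src H e)" "\<And>e. e \<in> S \<Longrightarrow> tgt G (i e) = a (tgt H e)"
  shows "(a x, a y) \<in> (adj_via G S')\<^sup>*"
  using assms(1)
proof (induction rule: rtrancl_induct)
  case (step y z)
  then obtain e where "e \<in> S" "{src H e, tgt H e} = {y, z}" by (auto simp: adj_via_def)
  then have "{src G (i e), tgt G (i e)} = {a y, a z}" "i e \<in> S'"
    using assms(2) assms(3,4)[of e] by (metis image_empty image_insert, blast)
  then have "(a y, a z) \<in> adj_via G S'" unfolding adj_via_def by blast
  with step.IH show ?case by (rule rtrancl_into_rtrancl)
qed simp

lemma graph_monomial_src_tgt: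
  "graph_monomial G \<Longrightarrow> e \<in> edges G \<Longrightarrow> src G e \<in> verts G \<and> tgt G e \<in> verts G"
  unfolding graph_monomial_def by auto

lemma graph_monomial_connected:
  assumes "graph_monomial G" "x \<in> verts G" "y \<in> verts G"
  shows "(x, y) \<in> (adj_via G (edges G))\<^sup>*"
proof -
  have "(x, y) \<in> (uadj G \<union> (uadj G)\<inverse>)\<^sup>*"
    using assms by (simp add: graph_monomial_def connected_gm_def)
  then show ?thesis by (simp add: uadj_symcl_eq_adj_via)
qed

lemma graph_monomial_incident_edge:
  assumes "graph_monomial G" "v \<in> verts G" "r \<in> verts G" "v \<noteq> r"
  obtains e where "e \<in> edges G" "src G e = v \<or> tgt G e = v"
proof -
  have "(v, r) \<in> (adj_via G (edges G))\<^sup>*" using graph_monomial_connected[OF assms(1-3)] .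
  then obtain z where "(v, z) \<in> adj_via G (edges G)"
    using assms(4) by (blast elim: converse_rtranclE)
  then obtain e where "e \<in> edges G" "{src G e, tgt G e} = {v, z}" by (auto simp: adj_via_def)
  then show ?thesis using that by (metis insertCI insertE singletonD)
qed

lemma upath_mono: "upath G S xs fs \<Longrightarrow> S \<subseteq> S' \<Longrightarrow> upath G S' xs fs"
  unfolding upath_def by auto

lemma upath_set_subset:
  assumes p: "upath G S xs fs" and "hd xs \<in> V" and "\<And>e. e \<in> S \<Longrightarrow> src G e \<in> V \<and> tgt G e \<in> V"
  shows "set xs \<subseteq> V"
proof -
  have "xs ! k \<in> V" if "k < length xs" for k
    using that
  proof (induction k)
    case 0
    then show ?case using assms(2) by (simp add: hd_conv_nth)
  next
    case (Suc k)
    then have "{src G (fs ! k), tgt G (fs ! k)} = {xs ! k, xs ! Suc k}" "fs ! k \<in> S"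
      using p by (auto simp: upath_def)
    then show ?case using assms(3)[of "fs ! k"] by (metis insertCI insertE singletonD)
  qed
  then show ?thesis by (auto simp: in_set_conv_nth)
qed

lemma upath_take:
  "upath G S xs fs \<Longrightarrow> k < length xs \<Longrightarrow> upath G S (take (Suc k) xs) (take k fs)"
  unfolding upath_def by (auto dest: in_set_takeD)

lemma upath_snoc:
  assumes p: "upath G S xs fs" and z: "z \<notin> set xs" and e: "e \<in> S" "{src G e, tgt G e} = {last xs, z}"
  shows "upath G S (xs @ [z]) (fs @ [e])"
proof -
  have L: "length xs = Suc (length fs)" using p by (simp add: upath_def)
  have "xs \<noteq> []" using L by auto
  with L have last: "last xs = xs ! length fs" by (simp add: last_conv_nth)
  have "e \<notin> set fs"
  proof
    assume "e \<in> set fs"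
    then obtain j where "j < length fs" "fs ! j = e" by (auto simp: in_set_conv_nth)
    with p e(2) have "z \<in> {xs ! j, xs ! Suc j}" "Suc j < length xs" by (auto simp: upath_def)
    with z show False by auto
  qed
  with p z e L last show ?thesis
    by (auto simp: upath_def nth_append less_Suc_eq)
qed

lemma rtrancl_adj_via_upath:
  assumes "(x, y) \<in> (adj_via G S)\<^sup>*"
  obtains xs fs where "upath G S xs fs" "hd xs = x" "last xs = y"
  using assms
proof (induction arbitrary: thesis rule: rtrancl_induct)
  case base
  show ?case by (rule base[of "[x]" "[]"]) (simp_all add: upath_def)
next
  case (step y z)
  obtain xs fs where p: "upath G S xs fs" "hd xs = x" "last xs = y" using step.IH .
  then have ne: "xs \<noteq> []" by (auto simp: upath_def)
  show ?case
  proof (cases "z \<in> set xs")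
    case True
    then obtain k where k: "k < length xs" "xs ! k = z" by (auto simp: in_set_conv_nth)
    have "hd (take (Suc k) xs) = x" using p(2) ne by (cases xs) auto
    moreover have "last (take (Suc k) xs) = z" using k by (simp add: take_Suc_conv_app_nth)
    ultimately show ?thesis using step.prems upath_take[OF p(1) k(1)] by blast
  next
    case False
    obtain e where "e \<in> S" "{src G e, tgt G e} = {y, z}" using step.hyps(2) by (auto simp: adj_via_def)
    then show ?thesis using step.prems[OF upath_snoc[OF p(1) False]] p ne by simp
  qed
qed

lemma graph_monomial_upath:
  assumes "graph_monomial G" "x \<in> verts G" "y \<in> verts G"
  obtains xs fs where "upath G (edges G) xs fs" "hd xs = x" "last xs = y"
  using rtrancl_adj_via_upath[OF graph_monomial_connected[OF assms]] .

lemma upath_Cons: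
  assumes p: "upath G S xs fs" and "b \<notin> set xs" "e \<in> S" "e \<notin> set fs" "{src G e, tgt G e} = {b, hd xs}"
  shows "upath G S (b # xs) (e # fs)"
proof -
  have "xs \<noteq> []" using p by (auto simp: upath_def)
  then show ?thesis using assms by (auto simp: upath_def nth_Cons' hd_conv_nth)
qed

lemma upath_map:
  assumes p: "upath H S xs fs" and "inj_on a (set xs)" "inj_on i (set fs)"
    and "\<And>e. e \<in> S \<Longrightarrow> src G (i e) = a (src H e)" "\<And>e. e \<in> S \<Longrightarrow> tgt G (i e) = a (tgt H e)"
  shows "upath G (i ` S) (map a xs) (map i fs)"
proof -
  have "{src G (i (fs ! j)), tgt G (i (fs ! j))} = {a (xs ! j), a (xs ! Suc j)}" if "j < length fs" for j
  proof -
    have "fs ! j \<in> S" "{src H (fs ! j), tgt H (fs ! j)} = {xs ! j, xs ! Suc j}"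
      using p that by (auto simp: upath_def)
    then show ?thesis using assms(4,5)[of "fs ! j"] by (metis image_empty image_insert)
  qed
  then show ?thesis using assms by (auto simp: upath_def distinct_map)
qed

lemma upath_close_ucycle:
  assumes p: "upath G S xs fs" and "S \<subseteq> edges G" "e \<in> edges G" "e \<notin> set fs"
    and "{src G e, tgt G e} = {last xs, hd xs}"
  shows "ucycle G xs (fs @ [e])"
proof -
  have L: "length xs = Suc (length fs)" using p by (simp add: upath_def)
  then have "xs \<noteq> []" by auto
  with L have ends: "last xs = xs ! length fs" "hd xs = xs ! 0" by (simp_all add: last_conv_nth hd_conv_nth)
  show ?thesis unfolding ucycle_def
  proof (intro conjI allI impI)
    fix i assume i: "i < length (fs @ [e])"
    then have "(i + 1) mod length (fs @ [e]) = (if i < length fs then Suc i else 0)"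
      by (cases "i = length fs") auto
    with i show "{src G ((fs @ [e]) ! i), tgt G ((fs @ [e]) ! i)} =
        {xs ! i, xs ! ((i + 1) mod length (fs @ [e]))}"
      using assms(1,5) ends by (auto simp: upath_def nth_append less_Suc_eq)
  qed (use assms L in \<open>auto simp: upath_def\<close>)
qed


section \<open>Cycles\<close>

lemma ucycle_in_simple_cycles: "ucycle G vs es \<Longrightarrow> set es \<in> simple_cycles G"
  unfolding simple_cycles_def by blast

lemma simple_cycles_subset_edges: "C \<in> simple_cycles G \<Longrightarrow> C \<subseteq> edges G"
  unfolding simple_cycles_def ucycle_def by blast

lemma ucycle_edge_endpoints:
  assumes cyc: "ucycle G vs es" and "e \<in> set es"
  shows "src G e \<in> set vs" "tgt G e \<in> set vs"
proof -
  obtain k where k: "k < length es" "es ! k = e" using assms(2) by (auto simp: in_set_conv_nth)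
  then have "{src G e, tgt G e} = {vs ! k, vs ! ((k + 1) mod length es)}"
    using cyc by (auto simp: ucycle_def)
  moreover have "vs ! k \<in> set vs" "vs ! ((k + 1) mod length es) \<in> set vs"
    using k cyc by (auto simp: ucycle_def)
  ultimately have "{src G e, tgt G e} \<subseteq> set vs" by simp
  then show "src G e \<in> set vs" "tgt G e \<in> set vs" by auto
qed

lemma is_tree_no_loop:
  assumes "is_tree t" "e \<in> edges t"
  shows "src t e \<noteq> tgt t e"
proof
  assume "src t e = tgt t e"
  then have "ucycle t [src t e] [e]" using assms(2) by (simp add: ucycle_def)
  then show False using assms(1) ucycle_in_simple_cycles by (fastforce simp: is_tree_def)
qed

lemma ucycle_rotate:
  assumes cyc: "ucycle G vs es"
  shows "ucycle G (rotate k vs) (rotate k es)"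
proof -
  let ?n = "length es"
  have L: "length vs = ?n" and n: "?n > 0" using cyc by (auto simp: ucycle_def)
  have "{src G (rotate k es ! i), tgt G (rotate k es ! i)} =
      {rotate k vs ! i, rotate k vs ! ((i + 1) mod ?n)}" if i: "i < ?n" for i
  proof -
    have "(k + i) mod ?n < ?n" using n by simp
    then have "{src G (es ! ((k + i) mod ?n)), tgt G (es ! ((k + i) mod ?n))} =
        {vs ! ((k + i) mod ?n), vs ! (((k + i) mod ?n + 1) mod ?n)}"
      using cyc by (simp add: ucycle_def)
    moreover have "((k + i) mod ?n + 1) mod ?n = (k + (i + 1) mod ?n) mod ?n"
      by (simp add: mod_simps)
    ultimately show ?thesis using i n L by (simp add: nth_rotate)
  qed
  then show ?thesis using cyc by (simp add: ucycle_def)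
qed

lemma ucycle_prefix_connected:
  assumes cyc: "ucycle G vs es" and "p < length vs" and "\<forall>q\<le>p. vs ! q \<noteq> B"
  shows "(vs ! 0, vs ! p) \<in> (adj_via G {e \<in> set es. src G e \<noteq> B \<and> tgt G e \<noteq> B})\<^sup>*"
  using assms(2,3)
proof (induction p)
  case (Suc p)
  then have "Suc p < length es" using cyc by (simp add: ucycle_def)
  then have "{src G (es ! p), tgt G (es ! p)} = {vs ! p, vs ! Suc p}" "es ! p \<in> set es"
    using cyc by (auto simp: ucycle_def)
  moreover have "vs ! p \<noteq> B" "vs ! Suc p \<noteq> B" using Suc.prems by auto
  ultimately have "(vs ! p, vs ! Suc p) \<in> adj_via G {e \<in> set es. src G e \<noteq> B \<and> tgt G e \<noteq> B}"
    unfolding adj_via_def by (auto simp: doubleton_eq_iff)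
  with Suc show ?case by (simp add: rtrancl_into_rtrancl)
qed simp

lemma distinct_rotate_to_end:
  assumes dist: "distinct xs"
  obtains k where "\<forall>q < length xs - 1. rotate k xs ! q \<noteq> x"
proof (cases "x \<in> set xs")
  case True
  then obtain i where i: "i < length xs" "xs ! i = x" by (auto simp: in_set_conv_nth)
  have "rotate (Suc i) xs ! q \<noteq> x" if "q < length xs - 1" for q
  proof -
    have "(Suc i + q) mod length xs \<noteq> i" "(Suc i + q) mod length xs < length xs"
      using that i(1) by (auto simp: mod_if)
    moreover have "rotate (Suc i) xs ! q = xs ! ((Suc i + q) mod length xs)"
      using that nth_rotate[of q xs "Suc i"] by linarith
    ultimately show ?thesis using i nth_eq_iff_index_eq[OF dist] by metis
  qed
  then show ?thesis using that by blast
next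
  case False
  have "rotate 0 xs ! q \<noteq> x" if "q < length xs - 1" for q
  proof -
    have "xs ! q \<in> set xs" using that by simp
    then show ?thesis using False by auto
  qed
  then show ?thesis using that by blast
qed

lemma ucycle_connected_avoiding:
  assumes cyc: "ucycle G vs es" and "a \<in> set vs" "a \<noteq> B" "b \<in> set vs" "b \<noteq> B"
  shows "(a, b) \<in> (adj_via G {e \<in> set es. src G e \<noteq> B \<and> tgt G e \<noteq> B})\<^sup>*"
proof -
  let ?n = "length vs" and ?R = "adj_via G {e \<in> set es. src G e \<noteq> B \<and> tgt G e \<noteq> B}"
  have dist: "distinct vs" using cyc by (simp add: ucycle_def)
  obtain k where k: "\<forall>q < ?n - 1. rotate k vs ! q \<noteq> B"
    using distinct_rotate_to_end[OF dist] .
  let ?ws = "rotate k vs"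
  have "(?ws ! 0, c) \<in> ?R\<^sup>*" if "c \<in> set vs" "c \<noteq> B" for c
  proof -
    have "c \<in> set ?ws" using that(1) by simp
    then obtain p where "p < length ?ws" "?ws ! p = c" unfolding in_set_conv_nth by blast
    then have p: "p < ?n" "?ws ! p = c" by simp_all
    have "\<forall>q\<le>p. ?ws ! q \<noteq> B"
    proof (intro allI impI)
      fix q assume q: "q \<le> p"
      show "?ws ! q \<noteq> B"
      proof (cases "q < ?n - 1")
        case True
        with k show ?thesis by blast
      next
        case False
        with q p(1) have "q = p" by linarith
        with p(2) that(2) show ?thesis by simp
      qed
    qed
    then have "(?ws ! 0, ?ws ! p) \<in> ?R\<^sup>*"
      using ucycle_prefix_connected[OF ucycle_rotate[OF cyc]] p(1) by simp
    with p(2) show ?thesis by simp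
  qed
  then show ?thesis using assms by (meson rtrancl_adj_via_sym rtrancl_trans)
qed

lemma dcycle_imp_ucycle: "dcycle G vs es \<Longrightarrow> ucycle G vs es"
  unfolding dcycle_def ucycle_def by auto

lemma dcycle_out_edge_unique:
  assumes dc: "dcycle G vs es" and "B \<in> set vs"
  shows "card {e \<in> set es. src G e = B} = 1"
proof -
  obtain j where j: "j < length es" "vs ! j = B"
    using assms by (auto simp: dcycle_def in_set_conv_nth)
  have "{e \<in> set es. src G e = B} = {es ! j}"
  proof (intro equalityI subsetI)
    fix e assume "e \<in> {e \<in> set es. src G e = B}"
    then obtain k where k: "k < length es" "e = es ! k" "vs ! k = vs ! j"
      using dc j by (auto simp: dcycle_def in_set_conv_nth)
    then have "k = j" using nth_eq_iff_index_eq[of vs k j] dc j by (simp add: dcycle_def)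
    then show "e \<in> {es ! j}" using k by simp
  qed (use dc j in \<open>auto simp: dcycle_def\<close>)
  then show ?thesis by simp
qed

lemma mod_Suc_eq_iff: "j < (n::nat) \<Longrightarrow> k < n \<Longrightarrow> (k + 1) mod n = j \<longleftrightarrow> k = (j + n - 1) mod n"
  by (cases "k + 1 = n"; cases j) (auto simp: mod_if)

lemma dcycle_in_edge_unique:
  assumes dc: "dcycle G vs es" and "B \<in> set vs"
  shows "card {e \<in> set es. tgt G e = B} = 1"
proof -
  let ?n = "length es"
  obtain j where j: "j < ?n" "vs ! j = B"
    using assms by (auto simp: dcycle_def in_set_conv_nth)
  have "{e \<in> set es. tgt G e = B} = {es ! ((j + ?n - 1) mod ?n)}"
  proof (intro equalityI subsetI)
    fix e assume "e \<in> {e \<in> set es. tgt G e = B}"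
    then obtain k where k: "k < ?n" "e = es ! k" "vs ! ((k + 1) mod ?n) = vs ! j"
      using dc j by (auto simp: dcycle_def in_set_conv_nth)
    moreover have "(k + 1) mod ?n < ?n" using k(1) by (metis mod_less_divisor gr_zeroI not_less0)
    ultimately have "(k + 1) mod ?n = j"
      using nth_eq_iff_index_eq[of vs "(k + 1) mod ?n" j] dc j by (simp add: dcycle_def)
    then show "e \<in> {es ! ((j + ?n - 1) mod ?n)}" using k j mod_Suc_eq_iff by simp
  next
    fix e assume "e \<in> {es ! ((j + ?n - 1) mod ?n)}"
    moreover have k: "(j + ?n - 1) mod ?n < ?n" using j(1) by (intro mod_less_divisor) linarith
    moreover have "((j + ?n - 1) mod ?n + 1) mod ?n = j" using mod_Suc_eq_iff[OF j(1) k] by simp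
    ultimately show "e \<in> {e \<in> set es. tgt G e = B}" using dc j by (auto simp: dcycle_def)
  qed
  then show ?thesis by simp
qed

lemma dcycle_two_edges_opposite:
  assumes dc: "dcycle G vs es" and "set es = {a, b}" "a \<noteq> b"
  shows "src G b = tgt G a \<and> tgt G b = src G a"
proof -
  have "length es = 2" using assms distinct_card[of es] by (simp add: dcycle_def)
  then obtain x y where es: "es = [x, y]" by (auto simp: numeral_2_eq_2 length_Suc_conv)
  have "\<forall>i<length es. src G (es ! i) = vs ! i \<and> tgt G (es ! i) = vs ! ((i + 1) mod length es)"
    using dc by (simp add: dcycle_def)
  from this[rule_format, of 0] this[rule_format, of 1]
  have "src G y = tgt G x" "tgt G y = src G x" using es by simp_all
  moreover have "{x, y} = {a, b}" using assms(2) es by simp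
  ultimately show ?thesis using assms(3) by (auto simp: doubleton_eq_iff)
qed

lemma oriented_cactus_cycle:
  assumes "oriented_cactus G" "e \<in> edges G"
  obtains C where "C \<in> simple_cycles G" "e \<in> C"
  using assms unfolding oriented_cactus_def is_cactus_def by blast

lemma oriented_cactus_cycle_unique:
  assumes "oriented_cactus G" "C \<in> simple_cycles G" "D \<in> simple_cycles G" "e \<in> C" "e \<in> D"
  shows "C = D"
proof -
  have "e \<in> edges G" using assms(2,4) simple_cycles_subset_edges by blast
  then show ?thesis using assms unfolding oriented_cactus_def is_cactus_def by blast
qed

lemma oriented_cactus_dcycle:
  assumes "oriented_cactus G" "C \<in> simple_cycles G"
  obtains vs es where "dcycle G vs es" "set es = C"
  using assms unfolding oriented_cactus_def by blast

lemma ucycle_pullback: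
  assumes cyc: "ucycle G vs es" and sub: "set es \<subseteq> i ` edges H"
    and inj: "inj_on a (verts H)" "inj_on i (edges H)"
    and ends: "\<And>e. e \<in> edges H \<Longrightarrow> src H e \<in> verts H \<and> tgt H e \<in> verts H"
    and src: "\<And>e. e \<in> edges H \<Longrightarrow> src G (i e) = a (src H e)"
    and tgt: "\<And>e. e \<in> edges H \<Longrightarrow> tgt G (i e) = a (tgt H e)"
  shows "ucycle H (map (inv_into (verts H) a) vs) (map (inv_into (edges H) i) es)"
proof -
  let ?n = "length es" and ?a' = "inv_into (verts H) a" and ?i' = "inv_into (edges H) i"
  have L: "length vs = ?n" using cyc by (simp add: ucycle_def)
  have E: "{src G (es ! k), tgt G (es ! k)} = {vs ! k, vs ! ((k + 1) mod ?n)}" if "k < ?n" for k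
    using cyc that by (simp add: ucycle_def)
  have pre: "?i' (es ! k) \<in> edges H \<and> es ! k = i (?i' (es ! k))" if "k < ?n" for k
  proof -
    have "es ! k \<in> i ` edges H" using sub that by auto
    then show ?thesis by (simp add: inv_into_into f_inv_into_f)
  qed
  have "set vs \<subseteq> a ` verts H"
  proof
    fix v assume "v \<in> set vs"
    then obtain k where k: "k < ?n" "v = vs ! k" using L by (auto simp: in_set_conv_nth)
    then have "v \<in> {src G (es ! k), tgt G (es ! k)}" using E by auto
    then show "v \<in> a ` verts H" using pre[OF k(1)] ends src tgt by (metis image_eqI insertE singletonD)
  qed
  then have "distinct (map ?a' vs)" using cyc inj_on_inv_into[of "set vs" a "verts H"]
    by (simp add: ucycle_def distinct_map)
  moreover have "distinct (map ?i' es)" using cyc sub inj_on_inv_into[of "set es" i "edges H"]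
    by (simp add: ucycle_def distinct_map)
  moreover have "{src H (?i' (es ! k)), tgt H (?i' (es ! k))} = {?a' (vs ! k), ?a' (vs ! ((k + 1) mod ?n))}"
    if k: "k < ?n" for k
  proof -
    let ?e = "?i' (es ! k)"
    have "a ` {src H ?e, tgt H ?e} = {vs ! k, vs ! ((k + 1) mod ?n)}"
      using E[OF k] pre[OF k] src tgt by (metis image_empty image_insert)
    then have "?a' ` a ` {src H ?e, tgt H ?e} = {?a' (vs ! k), ?a' (vs ! ((k + 1) mod ?n))}" by simp
    moreover have "?a' ` a ` {src H ?e, tgt H ?e} = {src H ?e, tgt H ?e}"
      using pre[OF k] ends inj(1) by (simp add: inv_into_f_f)
    ultimately show ?thesis by simp
  qed
  ultimately show ?thesis using cyc L pre by (auto simp: ucycle_def in_set_conv_nth)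
qed


section \<open>Two trees glued into an oriented cactus\<close>

locale two_tree_cactus =
  fixes G :: "('x, 'y, 'b) gm" and t :: "('v, 'e, 'c) gm" and t' :: "('w, 'f, 'd) gm"
    and \<alpha> :: "'v \<Rightarrow> 'x" and \<beta> :: "'w \<Rightarrow> 'x" and \<iota> :: "'e \<Rightarrow> 'y" and \<kappa> :: "'f \<Rightarrow> 'y"
  assumes cactus: "oriented_cactus G"
    and gm: "graph_monomial t" and tree: "is_tree t"
    and gm': "graph_monomial t'" and tree': "is_tree t'"
    and inj_\<alpha>: "inj_on \<alpha> (verts t)" and inj_\<beta>: "inj_on \<beta> (verts t')"
    and inj_\<iota>: "inj_on \<iota> (edges t)" and inj_\<kappa>: "inj_on \<kappa> (edges t')"
    and edges_G: "edges G = \<iota> ` edges t \<union> \<kappa> ` edges t'"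
    and edges_disjoint: "\<iota> ` edges t \<inter> \<kappa> ` edges t' = {}"
    and src_\<iota>: "\<And>e. e \<in> edges t \<Longrightarrow> src G (\<iota> e) = \<alpha> (src t e)"
    and tgt_\<iota>: "\<And>e. e \<in> edges t \<Longrightarrow> tgt G (\<iota> e) = \<alpha> (tgt t e)"
    and src_\<kappa>: "\<And>e. e \<in> edges t' \<Longrightarrow> src G (\<kappa> e) = \<beta> (src t' e)"
    and tgt_\<kappa>: "\<And>e. e \<in> edges t' \<Longrightarrow> tgt G (\<kappa> e) = \<beta> (tgt t' e)"

sublocale two_tree_cactus \<subseteq> swap: two_tree_cactus G t' t \<beta> \<alpha> \<kappa> \<iota>
  using two_tree_cactus_axioms unfolding two_tree_cactus_def by blast

context two_tree_cactus
begin

lemma ucycle_meets_right: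
  assumes cyc: "ucycle G vs es"
  shows "\<exists>f\<in>edges t'. \<kappa> f \<in> set es"
proof (rule ccontr)
  assume "\<not> ?thesis"
  then have "set es \<subseteq> \<iota> ` edges t" using cyc edges_G by (auto simp: ucycle_def)
  then have "ucycle t (map (inv_into (verts t) \<alpha>) vs) (map (inv_into (edges t) \<iota>) es)"
    using ucycle_pullback[OF cyc _ inj_\<alpha> inj_\<iota>] graph_monomial_src_tgt[OF gm] src_\<iota> tgt_\<iota> by blast
  then show False using tree ucycle_in_simple_cycles by (fastforce simp: is_tree_def)
qed

lemma right_connected:
  assumes "\<kappa> ` edges t' \<subseteq> S" "y \<in> verts t'" "y' \<in> verts t'"
  shows "(\<beta> y, \<beta> y') \<in> (adj_via G S)\<^sup>*"
  by (rule rtrancl_adj_via_map[OF graph_monomial_connected[OF gm' assms(2,3)] assms(1)])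
    (simp_all add: src_\<kappa> tgt_\<kappa>)

context
  fixes w assumes w: "w \<in> verts t" and unmatched: "\<alpha> w \<notin> \<beta> ` verts t'"
begin

lemma right_edges_avoid_unmatched: "\<kappa> ` edges t' \<subseteq> edges_avoiding G (\<alpha> w)"
  using unmatched graph_monomial_src_tgt[OF gm'] src_\<kappa> tgt_\<kappa> edges_G
  by (auto simp: edges_avoiding_def) (metis image_eqI)+

lemma edge_at_unmatched:
  assumes "e \<in> edges G" "e \<notin> edges_avoiding G (\<alpha> w)"
  obtains e1 where "e1 \<in> edges t" "e = \<iota> e1" "src t e1 = w \<or> tgt t e1 = w"
proof -
  obtain e1 where e1: "e1 \<in> edges t" "e = \<iota> e1"
    using assms edges_G right_edges_avoid_unmatched by blast
  then have "\<alpha> (src t e1) = \<alpha> w \<or> \<alpha> (tgt t e1) = \<alpha> w"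
    using assms(2) src_\<iota> tgt_\<iota> edges_G by (auto simp: edges_avoiding_def)
  then have "src t e1 = w \<or> tgt t e1 = w"
    using e1(1) w graph_monomial_src_tgt[OF gm] inj_\<alpha> by (auto dest: inj_onD)
  with e1 that show ?thesis by blast
qed

lemma edge_at_unmatched_other_end:
  assumes "e \<in> edges G" "e \<notin> edges_avoiding G (\<alpha> w)"
  obtains x where "x \<noteq> \<alpha> w" "{src G e, tgt G e} = {\<alpha> w, x}"
proof -
  obtain e1 where e1: "e1 \<in> edges t" "e = \<iota> e1" "src t e1 = w \<or> tgt t e1 = w"
    using edge_at_unmatched[OF assms] .
  have "src t e1 \<noteq> tgt t e1" using is_tree_no_loop[OF tree e1(1)] .
  then have "\<alpha> (src t e1) \<noteq> \<alpha> (tgt t e1)"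
    using e1(1) graph_monomial_src_tgt[OF gm] inj_\<alpha> by (auto dest: inj_onD)
  moreover have "src G e = \<alpha> (src t e1)" "tgt G e = \<alpha> (tgt t e1)" using e1 src_\<iota> tgt_\<iota> by auto
  ultimately show ?thesis using e1(3) that by (metis insert_commute)
qed

lemma neighbour_of_unmatched_reaches_right:
  assumes e: "e \<in> edges G" "{src G e, tgt G e} = {\<alpha> w, x}" and x: "x \<noteq> \<alpha> w"
  obtains y where "y \<in> verts t'" "(x, \<beta> y) \<in> (adj_via G (edges_avoiding G (\<alpha> w)))\<^sup>*"
proof -
  obtain C where "C \<in> simple_cycles G" "e \<in> C" using oriented_cactus_cycle[OF cactus e(1)] .
  then obtain vs es where cyc: "ucycle G vs es" "e \<in> set es" unfolding simple_cycles_def by blast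
  obtain f where f: "f \<in> edges t'" "\<kappa> f \<in> set es" using ucycle_meets_right[OF cyc(1)] by blast
  have "x \<in> {src G e, tgt G e}" using e(2) by simp
  then have x_on: "x \<in> set vs" using ucycle_edge_endpoints[OF cyc] by auto
  have y: "src t' f \<in> verts t'" using graph_monomial_src_tgt[OF gm' f(1)] by blast
  have y_on: "\<beta> (src t' f) \<in> set vs" using ucycle_edge_endpoints[OF cyc(1) f(2)] src_\<kappa> f(1) by simp
  have "\<beta> (src t' f) \<noteq> \<alpha> w" using unmatched y by force
  with x_on y_on x have "(x, \<beta> (src t' f)) \<in> (adj_via G {e \<in> set es. src G e \<noteq> \<alpha> w \<and> tgt G e \<noteq> \<alpha> w})\<^sup>*"
    by (intro ucycle_connected_avoiding[OF cyc(1)])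
  moreover have "{e \<in> set es. src G e \<noteq> \<alpha> w \<and> tgt G e \<noteq> \<alpha> w} \<subseteq> edges_avoiding G (\<alpha> w)"
    using cyc(1) by (auto simp: ucycle_def edges_avoiding_def)
  ultimately have "(x, \<beta> (src t' f)) \<in> (adj_via G (edges_avoiding G (\<alpha> w)))\<^sup>*"
    using rtrancl_adj_via_mono by blast
  with y that show ?thesis by blast
qed

lemma neighbours_of_unmatched_connected:
  assumes "e1 \<in> edges G" "{src G e1, tgt G e1} = {\<alpha> w, x1}" "x1 \<noteq> \<alpha> w"
    and "e2 \<in> edges G" "{src G e2, tgt G e2} = {\<alpha> w, x2}" "x2 \<noteq> \<alpha> w"
  shows "(x1, x2) \<in> (adj_via G (edges_avoiding G (\<alpha> w)))\<^sup>*"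
proof -
  let ?R = "adj_via G (edges_avoiding G (\<alpha> w))"
  obtain y1 where y1: "y1 \<in> verts t'" "(x1, \<beta> y1) \<in> ?R\<^sup>*"
    using neighbour_of_unmatched_reaches_right[OF assms(1-3)] .
  obtain y2 where y2: "y2 \<in> verts t'" "(x2, \<beta> y2) \<in> ?R\<^sup>*"
    using neighbour_of_unmatched_reaches_right[OF assms(4-6)] .
  have "(\<beta> y1, \<beta> y2) \<in> ?R\<^sup>*"
    by (rule right_connected[OF right_edges_avoid_unmatched y1(1) y2(1)])
  with y1(2) have "(x1, \<beta> y2) \<in> ?R\<^sup>*" by (rule rtrancl_trans)
  from this rtrancl_adj_via_sym[OF y2(2)] show ?thesis by (rule rtrancl_trans)
qed

lemma edges_at_unmatched_share_cycle:
  assumes a: "a \<in> edges G" "a \<notin> edges_avoiding G (\<alpha> w)"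
    and b: "b \<in> edges G" "b \<notin> edges_avoiding G (\<alpha> w)" and "a \<noteq> b"
  shows "\<exists>C\<in>simple_cycles G. a \<in> C \<and> b \<in> C"
proof -
  let ?S = "edges_avoiding G (\<alpha> w)"
  obtain x1 where x1: "x1 \<noteq> \<alpha> w" "{src G a, tgt G a} = {\<alpha> w, x1}"
    using edge_at_unmatched_other_end[OF a] .
  obtain x2 where x2: "x2 \<noteq> \<alpha> w" "{src G b, tgt G b} = {\<alpha> w, x2}"
    using edge_at_unmatched_other_end[OF b] .
  have "(x1, x2) \<in> (adj_via G ?S)\<^sup>*"
    using neighbours_of_unmatched_connected[OF a(1) x1(2,1) b(1) x2(2,1)] .
  then obtain xs fs where p: "upath G ?S xs fs" "hd xs = x1" "last xs = x2"
    by (rule rtrancl_adj_via_upath)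
  have "set xs \<subseteq> {v. v \<noteq> \<alpha> w}"
    by (rule upath_set_subset[OF p(1)]) (use p(2) x1(1) in \<open>auto simp: edges_avoiding_def\<close>)
  then have "\<alpha> w \<notin> set xs" by blast
  have fs: "set fs \<subseteq> ?S" using p(1) by (simp add: upath_def)
  have p': "upath G (edges G) xs fs" using upath_mono[OF p(1)] by (simp add: edges_avoiding_def)
  have "{src G a, tgt G a} = {\<alpha> w, hd xs}" using x1(2) p(2) by simp
  moreover have "a \<notin> set fs" using fs a(2) by blast
  ultimately have path: "upath G (edges G) (\<alpha> w # xs) (a # fs)"
    using upath_Cons[OF p' \<open>\<alpha> w \<notin> set xs\<close> a(1)] by simp
  have "xs \<noteq> []" using p(1) by (auto simp: upath_def)
  then have "last (\<alpha> w # xs) = x2" using p(3) by simp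
  then have "{src G b, tgt G b} = {last (\<alpha> w # xs), hd (\<alpha> w # xs)}" using x2(2) by auto
  moreover have "b \<notin> set (a # fs)" using fs b(2) \<open>a \<noteq> b\<close> by auto
  ultimately have "ucycle G (\<alpha> w # xs) ((a # fs) @ [b])"
    by (intro upath_close_ucycle[OF path order_refl b(1)])
  from ucycle_in_simple_cycles[OF this] show ?thesis by auto
qed

lemma edges_at_unmatched:
  "\<iota> ` {e \<in> edges t. src t e = w} = {e \<in> edges G. src G e = \<alpha> w}"
  "\<iota> ` {e \<in> edges t. tgt t e = w} = {e \<in> edges G. tgt G e = \<alpha> w}"
proof -
  have left: "\<exists>e1\<in>edges t. e = \<iota> e1 \<and> src G e = \<alpha> (src t e1) \<and> tgt G e = \<alpha> (tgt t e1)"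
    if e: "e \<in> edges G" "src G e = \<alpha> w \<or> tgt G e = \<alpha> w" for e
  proof -
    have "e \<notin> edges_avoiding G (\<alpha> w)" using e(2) by (auto simp: edges_avoiding_def)
    then obtain e1 where "e1 \<in> edges t" "e = \<iota> e1" using edge_at_unmatched[OF e(1)] by blast
    then show ?thesis using src_\<iota> tgt_\<iota> by blast
  qed
  have \<alpha>_eq: "\<alpha> v = \<alpha> w \<longleftrightarrow> v = w" if "v \<in> verts t" for v
    using inj_onD[OF inj_\<alpha> _ that w] by blast
  show "\<iota> ` {e \<in> edges t. src t e = w} = {e \<in> edges G. src G e = \<alpha> w}"
  proof (intro equalityI subsetI)
    fix x assume "x \<in> {e \<in> edges G. src G e = \<alpha> w}"
    then obtain e1 where "e1 \<in> edges t" "x = \<iota> e1" "\<alpha> (src t e1) = \<alpha> w" using left by force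
    then show "x \<in> \<iota> ` {e \<in> edges t. src t e = w}" using \<alpha>_eq graph_monomial_src_tgt[OF gm] by auto
  qed (use src_\<iota> edges_G in auto)
  show "\<iota> ` {e \<in> edges t. tgt t e = w} = {e \<in> edges G. tgt G e = \<alpha> w}"
  proof (intro equalityI subsetI)
    fix x assume "x \<in> {e \<in> edges G. tgt G e = \<alpha> w}"
    then obtain e1 where "e1 \<in> edges t" "x = \<iota> e1" "\<alpha> (tgt t e1) = \<alpha> w" using left by force
    then show "x \<in> \<iota> ` {e \<in> edges t. tgt t e = w}" using \<alpha>_eq graph_monomial_src_tgt[OF gm] by auto
  qed (use tgt_\<iota> edges_G in auto)
qed

lemma unmatched_in_out_one:
  assumes e0: "e0 \<in> edges t" "src t e0 = w \<or> tgt t e0 = w"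
  shows "indeg t w = 1 \<and> outdeg t w = 1"
proof -
  let ?S = "edges_avoiding G (\<alpha> w)"
  have a: "\<iota> e0 \<in> edges G" "\<iota> e0 \<notin> ?S"
    using e0 src_\<iota> tgt_\<iota> edges_G by (auto simp: edges_avoiding_def)
  obtain C where C: "C \<in> simple_cycles G" "\<iota> e0 \<in> C" using oriented_cactus_cycle[OF cactus a(1)] .
  have at_C: "e \<in> C" if e: "e \<in> edges G" "e \<notin> ?S" for e
  proof (cases "e = \<iota> e0")
    case False
    then have "\<iota> e0 \<noteq> e" by simp
    then obtain D where "D \<in> simple_cycles G" "\<iota> e0 \<in> D" "e \<in> D"
      using edges_at_unmatched_share_cycle[OF a e] by blast
    then show ?thesis using oriented_cactus_cycle_unique[OF cactus C(1)] C(2) by blast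
  qed (use C in simp)
  obtain vs es where dc: "dcycle G vs es" "set es = C" using oriented_cactus_dcycle[OF cactus C(1)] .
  have "src G (\<iota> e0) \<in> set vs" "tgt G (\<iota> e0) \<in> set vs"
    using ucycle_edge_endpoints[OF dcycle_imp_ucycle[OF dc(1)]] dc(2) C(2) by auto
  then have "\<alpha> w \<in> set vs" using a by (auto simp: edges_avoiding_def)
  moreover have "{e \<in> edges G. src G e = \<alpha> w} = {e \<in> set es. src G e = \<alpha> w}"
    "{e \<in> edges G. tgt G e = \<alpha> w} = {e \<in> set es. tgt G e = \<alpha> w}"
    using at_C dc(2) simple_cycles_subset_edges[OF C(1)] by (auto simp: edges_avoiding_def)
  ultimately have "card {e \<in> edges G. src G e = \<alpha> w} = 1" "card {e \<in> edges G. tgt G e = \<alpha> w} = 1"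
    using dcycle_out_edge_unique[OF dc(1)] dcycle_in_edge_unique[OF dc(1)] by simp_all
  moreover have "inj_on \<iota> {e \<in> edges t. P e}" for P by (rule inj_on_subset[OF inj_\<iota>]) auto
  ultimately show ?thesis
    unfolding indeg_def outdeg_def by (simp add: card_image flip: edges_at_unmatched)
qed

end

lemma left_image_subset:
  assumes "\<forall>v\<in>verts t. \<not> (indeg t v = 1 \<and> outdeg t v = 1)" "r \<in> verts t" "\<alpha> r \<in> \<beta> ` verts t'"
  shows "\<alpha> ` verts t \<subseteq> \<beta> ` verts t'"
proof (rule image_subsetI, rule ccontr)
  fix v assume v: "v \<in> verts t" "\<alpha> v \<notin> \<beta> ` verts t'"
  then have "v \<noteq> r" using assms(3) by auto
  then obtain e where "e \<in> edges t" "src t e = v \<or> tgt t e = v"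
    using graph_monomial_incident_edge[OF gm v(1) assms(2)] by blast
  then show False using unmatched_in_out_one[OF v] assms(1) v(1) by blast
qed

lemma matched_left_edge_ucycle:
  assumes match: "\<alpha> ` verts t \<subseteq> \<beta> ` verts t'" and e: "e \<in> edges t"
  obtains vs fs where "ucycle G vs (map \<kappa> fs @ [\<iota> e])" "fs \<noteq> []" "set fs \<subseteq> edges t'"
proof -
  have ends: "src t e \<in> verts t" "tgt t e \<in> verts t" using graph_monomial_src_tgt[OF gm e] by auto
  then obtain v' w' where v': "v' \<in> verts t'" "\<alpha> (src t e) = \<beta> v'"
    and w': "w' \<in> verts t'" "\<alpha> (tgt t e) = \<beta> w'" using match by blast
  have "v' \<noteq> w'"
    using v' w' ends is_tree_no_loop[OF tree e] inj_onD[OF inj_\<alpha>] by metis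
  obtain xs fs where p: "upath t' (edges t') xs fs" "hd xs = w'" "last xs = v'"
    using graph_monomial_upath[OF gm' w'(1) v'(1)] .
  have fs: "set fs \<subseteq> edges t'" using p(1) by (simp add: upath_def)
  have "set xs \<subseteq> verts t'"
    using upath_set_subset[OF p(1)] p(2) w'(1) graph_monomial_src_tgt[OF gm'] by blast
  then have "upath G (\<kappa> ` edges t') (map \<beta> xs) (map \<kappa> fs)"
    using upath_map[OF p(1) inj_on_subset[OF inj_\<beta>] inj_on_subset[OF inj_\<kappa> fs]] src_\<kappa> tgt_\<kappa> by blast
  moreover have "\<kappa> ` edges t' \<subseteq> edges G" "\<iota> e \<in> edges G" using edges_G e by auto
  moreover have "\<iota> e \<notin> set (map \<kappa> fs)" using edges_disjoint e fs by auto
  moreover have "xs \<noteq> []" using p(1) by (auto simp: upath_def)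
  then have "{src G (\<iota> e), tgt G (\<iota> e)} = {last (map \<beta> xs), hd (map \<beta> xs)}"
    using src_\<iota>[OF e] tgt_\<iota>[OF e] v'(2) w'(2) p(2,3) by (simp add: hd_map last_map)
  ultimately have "ucycle G (map \<beta> xs) (map \<kappa> fs @ [\<iota> e])" by (rule upath_close_ucycle)
  moreover have "fs \<noteq> []"
  proof
    assume "fs = []"
    then have "length xs = 1" using p(1) by (simp add: upath_def)
    then have "hd xs = last xs" by (cases xs) auto
    with p \<open>v' \<noteq> w'\<close> show False by simp
  qed
  ultimately show ?thesis using that fs by blast
qed

lemma cycle_through_matched_left_edge:
  assumes match: "\<alpha> ` verts t \<subseteq> \<beta> ` verts t'" and e: "e \<in> edges t"
    and C: "C \<in> simple_cycles G" "\<iota> e \<in> C"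
  obtains P where "P \<noteq> {}" "P \<subseteq> edges t'" "C = insert (\<iota> e) (\<kappa> ` P)"
proof -
  obtain vs fs where cyc: "ucycle G vs (map \<kappa> fs @ [\<iota> e])" "fs \<noteq> []" "set fs \<subseteq> edges t'"
    using matched_left_edge_ucycle[OF match e] .
  have "C = set (map \<kappa> fs @ [\<iota> e])"
    using oriented_cactus_cycle_unique[OF cactus C(1) ucycle_in_simple_cycles[OF cyc(1)] C(2)] by simp
  then show ?thesis using that[of "set fs"] cyc(2,3) by auto
qed

end

context two_tree_cactus
begin

lemma matched_images_eq:
  assumes "\<forall>v\<in>verts t. \<not> (indeg t v = 1 \<and> outdeg t v = 1)"
    and "\<forall>v\<in>verts t'. \<not> (indeg t' v = 1 \<and> outdeg t' v = 1)"
    and "r \<in> verts t" "r' \<in> verts t'" "\<alpha> r = \<beta> r'"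
  shows "\<alpha> ` verts t = \<beta> ` verts t'"
proof -
  have "\<alpha> r \<in> \<beta> ` verts t'" "\<beta> r' \<in> \<alpha> ` verts t" using assms(3-5) by (auto intro!: image_eqI)
  then show ?thesis
    using left_image_subset[OF assms(1,3)] swap.left_image_subset[OF assms(2,4)] by blast
qed

lemma matched_edge_reversed:
  assumes match: "\<alpha> ` verts t = \<beta> ` verts t'" and e: "e \<in> edges t"
  obtains e' where "e' \<in> edges t'" "\<beta> (src t' e') = \<alpha> (tgt t e)" "\<beta> (tgt t' e') = \<alpha> (src t e)"
proof -
  have "\<iota> e \<in> edges G" using e edges_G by blast
  then obtain C where C: "C \<in> simple_cycles G" "\<iota> e \<in> C" by (rule oriented_cactus_cycle[OF cactus])
  have "\<alpha> ` verts t \<subseteq> \<beta> ` verts t'" "\<beta> ` verts t' \<subseteq> \<alpha> ` verts t" using match by simp_all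
  obtain P where P: "P \<noteq> {}" "P \<subseteq> edges t'" "C = insert (\<iota> e) (\<kappa> ` P)"
    by (rule cycle_through_matched_left_edge[OF \<open>\<alpha> ` verts t \<subseteq> \<beta> ` verts t'\<close> e C])
  then obtain e' where e': "e' \<in> edges t'" "\<kappa> e' \<in> C" by blast
  obtain Q where Q: "Q \<subseteq> edges t" "C = insert (\<kappa> e') (\<iota> ` Q)"
    by (rule swap.cycle_through_matched_left_edge[OF \<open>\<beta> ` verts t' \<subseteq> \<alpha> ` verts t\<close> e'(1) C(1) e'(2)])
  have "\<kappa> ` P \<subseteq> {\<kappa> e'}"
  proof
    fix x assume x: "x \<in> \<kappa> ` P"
    then have "x \<notin> \<iota> ` Q" using P(2) Q(1) edges_disjoint by blast
    with x show "x \<in> {\<kappa> e'}" using P(3) Q(2) by blast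
  qed
  then have C2: "C = {\<iota> e, \<kappa> e'}" using P(3) e'(2) by blast
  have ne: "\<iota> e \<noteq> \<kappa> e'" using e e'(1) edges_disjoint by blast
  obtain vs es where dc: "dcycle G vs es" "set es = C" using oriented_cactus_dcycle[OF cactus C(1)] .
  have "src G (\<kappa> e') = tgt G (\<iota> e) \<and> tgt G (\<kappa> e') = src G (\<iota> e)"
    using dcycle_two_edges_opposite[OF dc(1) _ ne] dc(2) C2 by simp
  then show ?thesis using that[OF e'(1)] src_\<iota>[OF e] tgt_\<iota>[OF e] src_\<kappa>[OF e'(1)] tgt_\<kappa>[OF e'(1)] by simp
qed

end

context two_tree_cactus
begin

lemma reversing_bijection:
  assumes match: "\<alpha> ` verts t = \<beta> ` verts t'"
  obtains f where "bij_betw f (verts t) (verts t')" "\<And>v. v \<in> verts t \<Longrightarrow> \<beta> (f v) = \<alpha> v"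
    "\<And>v w. v \<in> verts t \<Longrightarrow> w \<in> verts t \<Longrightarrow>
       (\<exists>e\<in>edges t. src t e = v \<and> tgt t e = w) \<longleftrightarrow> (\<exists>e\<in>edges t'. src t' e = f w \<and> tgt t' e = f v)"
proof
  define f where "f = inv_into (verts t') \<beta> \<circ> \<alpha>"
  have f: "f v \<in> verts t'" "\<beta> (f v) = \<alpha> v" if "v \<in> verts t" for v
  proof -
    have "\<alpha> v \<in> \<beta> ` verts t'" using match that by blast
    then show "f v \<in> verts t'" "\<beta> (f v) = \<alpha> v" by (simp_all add: f_def inv_into_into f_inv_into_f)
  qed
  show "bij_betw f (verts t) (verts t')"
    unfolding f_def using inj_\<alpha> inj_\<beta> match
    by (metis bij_betw_imageI bij_betw_inv_into bij_betw_trans)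
  show "\<beta> (f v) = \<alpha> v" if "v \<in> verts t" for v using f that by simp
  fix v w assume v: "v \<in> verts t" and w: "w \<in> verts t"
  show "(\<exists>e\<in>edges t. src t e = v \<and> tgt t e = w) \<longleftrightarrow> (\<exists>e\<in>edges t'. src t' e = f w \<and> tgt t' e = f v)"
  proof
    assume "\<exists>e\<in>edges t. src t e = v \<and> tgt t e = w"
    then obtain e where e: "e \<in> edges t" "src t e = v" "tgt t e = w" by blast
    obtain e' where e': "e' \<in> edges t'" "\<beta> (src t' e') = \<beta> (f w)" "\<beta> (tgt t' e') = \<beta> (f v)"
      using matched_edge_reversed[OF match e(1)] e f v w by metis
    then show "\<exists>e\<in>edges t'. src t' e = f w \<and> tgt t' e = f v"
      using f v w graph_monomial_src_tgt[OF gm' e'(1)] inj_onD[OF inj_\<beta>] by metis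
  next
    assume "\<exists>e'\<in>edges t'. src t' e' = f w \<and> tgt t' e' = f v"
    then obtain e' where e': "e' \<in> edges t'" "src t' e' = f w" "tgt t' e' = f v" by blast
    obtain e where e: "e \<in> edges t" "\<alpha> (src t e) = \<alpha> v" "\<alpha> (tgt t e) = \<alpha> w"
      using swap.matched_edge_reversed[OF match[symmetric] e'(1)] e' f v w by metis
    then show "\<exists>e\<in>edges t. src t e = v \<and> tgt t e = w"
      using v w graph_monomial_src_tgt[OF gm e(1)] inj_onD[OF inj_\<alpha>] by metis
  qed
qed

end


section \<open>Partitions and the closed product\<close>

lemma blk_partition_eq:
  assumes "partition_on A P" "Y \<in> P" "x \<in> Y"
  shows "blk P x = Y"
  unfolding blk_def
proof (rule the_equality)
  fix Z assume "Z \<in> P \<and> x \<in> Z"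
  then show "Z = Y" using assms disjointD[OF partition_onD2[OF assms(1)]] by blast
qed (use assms in simp)

lemma blk_partition:
  assumes "partition_on A P" "x \<in> A"
  shows "blk P x \<in> P" "x \<in> blk P x"
proof -
  have "x \<in> \<Union>P" using assms partition_onD1 by metis
  then obtain Y where "Y \<in> P" "x \<in> Y" by blast
  then show "blk P x \<in> P" "x \<in> blk P x" using blk_partition_eq[OF assms(1)] by simp_all
qed

lemma partition_on_same_blk:
  assumes "partition_on A P" "x \<in> A" "y \<in> A" "blk P y = blk P x"
  shows "\<exists>B\<in>P. x \<in> B \<and> y \<in> B"
  using blk_partition[OF assms(1,2)] blk_partition(2)[OF assms(1,3)] assms(4) by auto

lemma partition_on_eq_blk_image:
  assumes "partition_on A P"
  shows "P = blk P ` A"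
proof (intro equalityI subsetI)
  fix Y assume Y: "Y \<in> P"
  then have "Y \<noteq> {}" using partition_onD3[OF assms] by blast
  then obtain x where x: "x \<in> Y" by blast
  with Y have "x \<in> A" using partition_onD1[OF assms] by blast
  then show "Y \<in> blk P ` A" using blk_partition_eq[OF assms Y x] by blast
qed (use blk_partition[OF assms] in auto)

lemma partition_on_glue_part:
  assumes "a \<in> A" "b \<in> A"
  shows "partition_on A (glue_part A a b)"
proof -
  have "disjnt {a, b} (\<Union> ((\<lambda>x. {x}) ` (A - {a, b})))" by (auto simp: disjnt_def)
  then show ?thesis unfolding glue_part_def
    by (subst partition_on_insert) (use assms partition_on_singletons in auto)
qed

lemma blk_glue_part_ends:
  assumes "a \<in> A" "b \<in> A"
  shows "blk (glue_part A a b) a = {a, b}" "blk (glue_part A a b) b = {a, b}"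
proof -
  have "{a, b} \<in> glue_part A a b" by (simp add: glue_part_def)
  from blk_partition_eq[OF partition_on_glue_part[OF assms] this]
  show "blk (glue_part A a b) a = {a, b}" "blk (glue_part A a b) b = {a, b}" by simp_all
qed

lemma glue_part_refl: "a \<in> A \<Longrightarrow> glue_part A a a = (\<lambda>x. {x}) ` A"
  unfolding glue_part_def by blast

lemma blk_singletons: "x \<in> A \<Longrightarrow> blk ((\<lambda>x. {x}) ` A) x = {x}"
  by (rule blk_partition_eq[OF partition_on_singletons]) auto

lemma partition_on_prod_part:
  assumes "vin t \<in> verts t" "vout t' \<in> verts t'"
  shows "partition_on (Inl ` verts t \<union> Inr ` verts t') (prod_part t t')"
  using partition_on_glue_part[of "Inl (vin t)" "verts (dunion t t')" "Inr (vout t')"] assms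
  by (simp add: prod_part_def dunion_def)

text \<open>The product already glues the two roots, so input and output of \<open>gprod t t'\<close> are one
  vertex and \<open>delta\<close> identifies nothing more.\<close>
lemma delta_part_gprod:
  assumes "vin t = vout t" "vin t' = vout t'" "vin t \<in> verts t" "vin t' \<in> verts t'"
  shows "delta_part (gprod t t') = (\<lambda>X. {X}) ` prod_part t t'"
proof -
  let ?A = "Inl ` verts t \<union> Inr ` verts t'" and ?r = "{Inl (vin t), Inr (vin t')}"
  have P: "prod_part t t' = glue_part ?A (Inl (vin t)) (Inr (vin t'))"
    using assms(2) by (simp add: prod_part_def dunion_def)
  have ends: "Inl (vin t) \<in> ?A" "Inr (vin t') \<in> ?A" using assms(3,4) by auto
  have "?r \<in> prod_part t t'" unfolding P by (simp add: glue_part_def)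
  moreover have "blk (prod_part t t') (Inl (vin t)) = ?r" "blk (prod_part t t') (Inr (vin t')) = ?r"
    unfolding P by (rule blk_glue_part_ends[OF ends])+
  then have "verts (gprod t t') = prod_part t t'" "vin (gprod t t') = ?r" "vout (gprod t t') = ?r"
    using assms(1) by (simp_all add: gprod_def quot_def dunion_def)
  ultimately show ?thesis using glue_part_refl by (simp add: delta_part_def)
qed

lemma vl_vr_eq:
  assumes "vin t = vout t" "vin t' = vout t'" "vin t \<in> verts t" "vin t' \<in> verts t'"
  shows "v \<in> verts t \<Longrightarrow> vl t t' v = {blk (prod_part t t') (Inl v)}"
    and "v' \<in> verts t' \<Longrightarrow> vr t t' v' = {blk (prod_part t t') (Inr v')}"
proof -
  have part: "partition_on (Inl ` verts t \<union> Inr ` verts t') (prod_part t t')"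
    using partition_on_prod_part assms(2-4) by simp
  show "vl t t' v = {blk (prod_part t t') (Inl v)}" if "v \<in> verts t"
  proof -
    have "blk (prod_part t t') (Inl v) \<in> prod_part t t'" using blk_partition(1)[OF part] that by simp
    then show ?thesis unfolding vl_def delta_part_gprod[OF assms] by (rule blk_singletons)
  qed
  show "vr t t' v' = {blk (prod_part t t') (Inr v')}" if "v' \<in> verts t'"
  proof -
    have "blk (prod_part t t') (Inr v') \<in> prod_part t t'" using blk_partition(1)[OF part] that by simp
    then show ?thesis unfolding vr_def delta_part_gprod[OF assms] by (rule blk_singletons)
  qed
qed

lemma verts_delta_gprod:
  assumes "vin t = vout t" "vin t' = vout t'" "vin t \<in> verts t" "vin t' \<in> verts t'"
  shows "verts (delta (gprod t t')) = vl t t' ` verts t \<union> vr t t' ` verts t'"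
    and "vl t t' (vin t) = vr t t' (vin t')"
proof -
  let ?A = "Inl ` verts t \<union> Inr ` verts t'"
  have part: "partition_on ?A (prod_part t t')"
    using partition_on_prod_part assms(2-4) by simp
  have "verts (delta (gprod t t')) = (\<lambda>X. {X}) ` blk (prod_part t t') ` ?A"
    using partition_on_eq_blk_image[OF part] delta_part_gprod[OF assms]
    by (simp add: delta_def quot_def)
  then show "verts (delta (gprod t t')) = vl t t' ` verts t \<union> vr t t' ` verts t'"
    using vl_vr_eq[OF assms] by (auto simp: image_Un image_image)
  have "Inl (vin t) \<in> verts (dunion t t')" "Inr (vout t') \<in> verts (dunion t t')"
    using assms(2-4) by (simp_all add: dunion_def)
  then have "blk (prod_part t t') (Inl (vin t)) = blk (prod_part t t') (Inr (vin t'))"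
    unfolding prod_part_def using blk_glue_part_ends assms(2) by metis
  then show "vl t t' (vin t) = vr t t' (vin t')" using vl_vr_eq[OF assms] assms(3,4) by simp
qed

lemma quot_delta_gprod_simps:
  "edges (quot (delta (gprod t t')) \<pi>) = Inl ` edges t \<union> Inr ` edges t'"
  "src (quot (delta (gprod t t')) \<pi>) (Inl e) = blk \<pi> (vl t t' (src t e))"
  "tgt (quot (delta (gprod t t')) \<pi>) (Inl e) = blk \<pi> (vl t t' (tgt t e))"
  "src (quot (delta (gprod t t')) \<pi>) (Inr e') = blk \<pi> (vr t t' (src t' e'))"
  "tgt (quot (delta (gprod t t')) \<pi>) (Inr e') = blk \<pi> (vr t t' (tgt t' e'))"
  by (simp_all add: quot_def delta_def gprod_def dunion_def vl_def vr_def)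

lemma two_tree_cactus_quot_delta_gprod:
  assumes D: "in_D sc t" "in_D sc' t'"
    and part: "partition_on (verts (delta (gprod t t'))) \<pi>"
    and inj_l: "\<forall>B\<in>\<pi>. \<forall>v\<in>verts t. \<forall>w\<in>verts t. vl t t' v \<in> B \<and> vl t t' w \<in> B \<longrightarrow> v = w"
    and inj_r: "\<forall>B\<in>\<pi>. \<forall>v\<in>verts t'. \<forall>w\<in>verts t'. vr t t' v \<in> B \<and> vr t t' w \<in> B \<longrightarrow> v = w"
    and cactus: "oriented_cactus (quot (delta (gprod t t')) \<pi>)"
  shows "two_tree_cactus (quot (delta (gprod t t')) \<pi>) t t'
    (\<lambda>v. blk \<pi> (vl t t' v)) (\<lambda>v. blk \<pi> (vr t t' v)) Inl Inr"
proof -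
  have "vin t = vout t" "vin t' = vout t'" "vin t \<in> verts t" "vin t' \<in> verts t'"
    using D by (simp_all add: in_D_def graph_monomial_def)
  note verts = verts_delta_gprod(1)[OF this]
  have "inj_on (\<lambda>v. blk \<pi> (vl t t' v)) (verts t)"
    using inj_l blk_partition[OF part] unfolding verts by (intro inj_onI) (metis UnI1 image_eqI)
  moreover have "inj_on (\<lambda>v. blk \<pi> (vr t t' v)) (verts t')"
    using inj_r blk_partition[OF part] unfolding verts by (intro inj_onI) (metis UnI2 image_eqI)
  moreover have "Inl ` edges t \<inter> Inr ` edges t' = {}" by blast
  ultimately show ?thesis
    using D cactus unfolding two_tree_cactus_def in_D_def by (simp add: quot_delta_gprod_simps)
qed

lemma partition_two_sided_blocks:
  assumes part: "partition_on (g ` A \<union> h ` A') P"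
    and inj_g: "\<forall>B\<in>P. \<forall>a\<in>A. \<forall>b\<in>A. g a \<in> B \<and> g b \<in> B \<longrightarrow> a = b"
    and inj_h: "\<forall>B\<in>P. \<forall>a\<in>A'. \<forall>b\<in>A'. h a \<in> B \<and> h b \<in> B \<longrightarrow> a = b"
    and match: "(\<lambda>a. blk P (g a)) ` A = (\<lambda>a. blk P (h a)) ` A'"
  shows "\<forall>B\<in>P. \<exists>a\<in>A. \<exists>a'\<in>A'. B = {g a, h a'}"
proof
  fix B assume B: "B \<in> P"
  then have "B \<in> (\<lambda>a. blk P (g a)) ` A \<union> (\<lambda>a. blk P (h a)) ` A'"
    using partition_on_eq_blk_image[OF part] by (auto simp: image_Un image_image)
  then have "B \<in> (\<lambda>a. blk P (g a)) ` A" "B \<in> (\<lambda>a. blk P (h a)) ` A'" using match by auto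
  then obtain a a' where a: "a \<in> A" "B = blk P (g a)" and a': "a' \<in> A'" "B = blk P (h a')"
    by blast
  have "g a \<in> B" "h a' \<in> B" using a a' blk_partition(2)[OF part] by auto
  moreover have "B \<subseteq> g ` A \<union> h ` A'" using B part partition_onD1 by blast
  ultimately have "B = {g a, h a'}" using inj_g inj_h B a(1) a'(1) by blast
  with a(1) a'(1) show "\<exists>a\<in>A. \<exists>a'\<in>A'. B = {g a, h a'}" by blast
qed

lemma partition_two_sided_blk_common:
  assumes part: "partition_on (g ` A \<union> h ` A') P"
    and inj_g: "\<forall>B\<in>P. \<forall>a\<in>A. \<forall>b\<in>A. g a \<in> B \<and> g b \<in> B \<longrightarrow> a = b"
    and inj_h: "\<forall>B\<in>P. \<forall>a\<in>A'. \<forall>b\<in>A'. h a \<in> B \<and> h b \<in> B \<longrightarrow> a = b"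
    and pairs: "\<forall>B\<in>P. \<exists>a\<in>A. \<exists>a'\<in>A'. B = {g a, h a'}"
    and r: "r \<in> A" "r' \<in> A'" "g r = h r'"
  shows "blk P (g r) = {g r}"
proof -
  have B: "blk P (g r) \<in> P" "g r \<in> blk P (g r)" using blk_partition[OF part] r(1) by auto
  then obtain a a' where "a \<in> A" "a' \<in> A'" "blk P (g r) = {g a, h a'}" using pairs by blast
  with B r inj_g inj_h have "a = r" "a' = r'" by (metis insertCI)+
  with \<open>blk P (g r) = {g a, h a'}\<close> r(3) show ?thesis by simp
qed

theorem lemma2p27:
  fixes sc :: "complex \<Rightarrow> 'a::ring_1 \<Rightarrow> 'a" and phi :: "'a \<Rightarrow> complex"
    and t :: "('v, 'e, 'a) gm" and t' :: "('w, 'f, 'a) gm"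
    and \<pi> :: "('v + 'w) set set set set"
  assumes "tracial_ncps sc phi"
    and "in_D sc t" and "in_D sc t'"
    and "partition_on (verts (delta (gprod t t'))) \<pi>"
    and "\<forall>B\<in>\<pi>. \<forall>v\<in>verts t. \<forall>w\<in>verts t. vl t t' v \<in> B \<and> vl t t' w \<in> B \<longrightarrow> v = w"
    and "\<forall>B\<in>\<pi>. \<forall>v\<in>verts t'. \<forall>w\<in>verts t'. vr t t' v \<in> B \<and> vr t t' w \<in> B \<longrightarrow> v = w"
    and "oriented_cactus (quot (delta (gprod t t')) \<pi>)"
  shows "(\<forall>B\<in>\<pi>. \<exists>v\<in>verts t. \<exists>v'\<in>verts t'. B = {vl t t' v, vr t t' v'})
    \<and> blk \<pi> (vl t t' (vin t)) = {vl t t' (vin t)}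
    \<and> vl t t' (vin t) = vr t t' (vin t')
    \<and> (\<exists>f. bij_betw f (verts t) (verts t')
          \<and> (\<forall>v\<in>verts t. \<exists>B\<in>\<pi>. vl t t' v \<in> B \<and> vr t t' (f v) \<in> B)
          \<and> (\<forall>v\<in>verts t. \<forall>w\<in>verts t.
               (\<exists>e\<in>edges t. src t e = v \<and> tgt t e = w) \<longleftrightarrow>
               (\<exists>e\<in>edges t'. src t' e = f w \<and> tgt t' e = f v)))"
proof -
  note part = assms(4) and inj_l = assms(5) and inj_r = assms(6)
  have "vin t = vout t" "vin t' = vout t'" and roots: "vin t \<in> verts t" "vin t' \<in> verts t'"
    using assms(2,3) by (simp_all add: in_D_def graph_monomial_def)
  note verts = verts_delta_gprod(1)[OF this] and root = verts_delta_gprod(2)[OF this]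
  interpret two_tree_cactus "quot (delta (gprod t t')) \<pi>" t t'
      "\<lambda>v. blk \<pi> (vl t t' v)" "\<lambda>v. blk \<pi> (vr t t' v)" Inl Inr
    by (rule two_tree_cactus_quot_delta_gprod[OF assms(2-7)])
  have match: "(\<lambda>v. blk \<pi> (vl t t' v)) ` verts t = (\<lambda>v. blk \<pi> (vr t t' v)) ` verts t'"
    by (rule matched_images_eq[OF _ _ roots]) (use assms(2,3) root in \<open>simp_all add: in_D_def\<close>)
  have pairs: "\<forall>B\<in>\<pi>. \<exists>v\<in>verts t. \<exists>v'\<in>verts t'. B = {vl t t' v, vr t t' v'}"
    using partition_two_sided_blocks[OF part[unfolded verts] inj_l inj_r match] .
  have root_block: "blk \<pi> (vl t t' (vin t)) = {vl t t' (vin t)}"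
    using partition_two_sided_blk_common[OF part[unfolded verts] inj_l inj_r pairs roots root] .
  obtain f where f: "bij_betw f (verts t) (verts t')"
      "\<And>v. v \<in> verts t \<Longrightarrow> blk \<pi> (vr t t' (f v)) = blk \<pi> (vl t t' v)"
      "\<And>v w. v \<in> verts t \<Longrightarrow> w \<in> verts t \<Longrightarrow> (\<exists>e\<in>edges t. src t e = v \<and> tgt t e = w) \<longleftrightarrow>
         (\<exists>e\<in>edges t'. src t' e = f w \<and> tgt t' e = f v)"
    using reversing_bijection[OF match] by blast
  have blocks: "\<exists>B\<in>\<pi>. vl t t' v \<in> B \<and> vr t t' (f v) \<in> B" if "v \<in> verts t" for v
  proof (rule partition_on_same_blk[OF part _ _ f(2)[OF that]])
    show "vl t t' v \<in> verts (delta (gprod t t'))" "vr t t' (f v) \<in> verts (delta (gprod t t'))"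
      using that bij_betwE[OF f(1)] unfolding verts by auto
  qed
  show ?thesis
    using pairs root_block root by (intro conjI exI[of _ f]) (simp_all add: f(1) blocks f(3))
qed

end
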